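(* Let $E^W_0=0$. The generating function for the expected number of napkinless diners under algorithm $W$ is \[ \sum_{n\ge 0}E^W_n z^n=\frac{z^3(2-z)}{2(1-z)^2(2+z)}, \] and for every $n\ge 0$, \[ E^W_{n+3}=\frac{(3n+7)2^{n-1}+(-1)^n}{9\cdot 2^n}. \]
   Context: Seating model. A circular table has $n\ge 1$ seats, with exactly one napkin between each pair of adjacent seats ($n$ napkins in total). "Left" and "right" are from the perspective of a seated diner. Diners $1,\dots,n$ arrive in this order and a maitre d' chooses a seat for each. A preference order is $\sigma=(\sigma_1,\dots,\sigma_n)\in\{-1,1\}^n$, where $\sigma_j=+1$ means diner $j$ prefers the napkin on their right and $\sigma_j=-1$ the napkin on their left. When diner $j$ is seated, they take their preferred adjacent napkin if it is still on the table; otherwise the other adjacent napkin if still on the table; otherwise they are napkinless. The maitre d' observes which napkin each seated diner takes. The "previous diner" means the most recently seated diner. Algorithm $W$ (trap setting). Seat diner 1; the primary direction $d\in\{\text{left},\text{right}\}$ is the side of the napkin diner 1 takes. All movement below is in direction $d$. (W1) If the two seats at distance 1 and 2 in direction $d$ from the previous diner's seat are both empty, go to W2; otherwise go to W4. (W2) If the previous diner took the napkin on their side $d$, seat the next diner two seats in direction $d$ from the previous diner and return to W1; otherwise go to W3. (W3) Seat the next diner one seat in direction $d$ from the previous diner and return to W1. (W4) Seat all remaining diners, one at a time in order of arrival, in the empty seats, in the order in which these seats are encountered moving in direction $d$ starting from diner 1's seat. For $n\ge1$, $\nu_W(\sigma)$ is the number of napkinless diners when the $n$ diners with preference order $\sigma$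 are seated at the circular table with $n$ seats by algorithm $W$, and $E^W_n=2^{-n}\sum_{\sigma\in\{-1,1\}^n}\nu_W(\sigma)$ is its expectation for uniformly random $\sigma$. *)

theory Defs
  imports "HOL-Analysis.Analysis" "HOL-Computational_Algebra.Formal_Power_Series"
begin

text \<open>Seats and napkins are numbered by residues mod n (integers in 0..n-1).
  Napkin i lies between seat i and seat i+1. For a diner at seat s, the napkin on
  the right (side +1) is napkin s, the napkin on the left (side -1) is napkin s-1;
  moving in direction +1 (right) from seat s leads to seat s+1, direction -1 to s-1.
  Preferences / sides / directions are encoded as the integers +1 (right) and -1 (left).\<close>

definition side_nap :: "nat \<Rightarrow> int \<Rightarrow> int \<Rightarrow> int" where
  "side_nap n s e = (if e = 1 then s mod int n else (s - 1) mod int n)"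

text \<open>Side of the napkin taken by a diner at seat s with preference e, given the
  set N of napkins still on the table; None = napkinless.\<close>
definition take_nap :: "nat \<Rightarrow> int set \<Rightarrow> int \<Rightarrow> int \<Rightarrow> int option" where
  "take_nap n N s e =
     (if side_nap n s e \<in> N then Some e
      else if side_nap n s (-e) \<in> N then Some (-e) else None)"

definition first_empty :: "nat \<Rightarrow> int \<Rightarrow> int set \<Rightarrow> int" where
  "first_empty n d occ = (d * int (LEAST k::nat. (d * int k) mod int n \<notin> occ)) mod int n"

text \<open>State: occupied seats, napkins on table, previous diner's seat, side of the
  napkin taken by the previous diner, whether step W4 has been reached, number
  of napkinless diners so far.\<close>
type_synonym wstate = "int set \<times> int set \<times> int \<times> int option \<times> bool \<times> nat"

fun runW :: "nat \<Rightarrow> int \<Rightarrow> wstate \<Rightarrow> int list \<Rightarrow> nat" where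
  "runW n d (occ, N, p, t, w4, c) [] = c"
| "runW n d (occ, N, p, t, w4, c) (e # es) =
     (let w4' = (w4 \<or> \<not> ((p + d) mod int n \<notin> occ \<and> (p + 2 * d) mod int n \<notin> occ));
          s = (if w4' then first_empty n d occ
               else if t = Some d then (p + 2 * d) mod int n else (p + d) mod int n);
          r = take_nap n N s e;
          N' = (case r of None \<Rightarrow> N | Some e' \<Rightarrow> N - {side_nap n s e'})
      in runW n d (insert s occ, N', s, r, w4', c + (if r = None then 1 else 0)) es)"

text \<open>Number of napkinless diners under algorithm W for preference order sigma
  (a list of length n over {-1,1}); diner 1 is seated at seat 0 and takes the
  preferred napkin, which fixes the primary direction d.\<close>
definition nuW :: "nat \<Rightarrow> int list \<Rightarrow> nat" where
  "nuW n \<sigma> = (case \<sigma> of [] \<Rightarrow> 0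
     | e1 # es \<Rightarrow> runW n e1 ({0}, {0..<int n} - {side_nap n 0 e1}, 0, Some e1, False, 0) es)"

definition prefs :: "nat \<Rightarrow> int list set" where
  "prefs n = {\<sigma>. length \<sigma> = n \<and> set \<sigma> \<subseteq> {-1, 1}}"

definition EW :: "nat \<Rightarrow> real" where
  "EW n = (if n = 0 then 0 else (\<Sum>\<sigma>\<in>prefs n. real (nuW n \<sigma>)) / 2 ^ n)"

end

(* Reflecting the table reduces everything to primary direction right. While steps W1-W3 run,
   every diner finds a napkin, and a trap (an empty seat whose two napkins are both gone) is
   set exactly when a diner is seated two places on, because the previous diner took the
   napkin on the right, and then takes the napkin on the left. When W4 starts no two empty
   seats are adjacent, so the diners seated in W4 are napkinless exactly at the traps. The
   number of traps is a simple function of the preference sequence; averaging gives a linear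
   recurrence with solution E_(n+2) = (3n+4)/18 - 2/9 (-1/2)^n, which is checked against the
   generating function coefficientwise. *)

theory Submission
  imports Defs
begin

definition trap_seats :: "nat \<Rightarrow> int set \<Rightarrow> int set \<Rightarrow> int set" where
  "trap_seats n occ N = {x \<in> {0..<int n} - occ. x \<notin> N \<and> (x - 1) mod int n \<notin> N}"

definition enters_W4 :: "nat \<Rightarrow> int \<Rightarrow> int set \<Rightarrow> int \<Rightarrow> bool \<Rightarrow> bool" where
  "enters_W4 n d occ p w4 \<longleftrightarrow> w4 \<or> (p + d) mod int n \<in> occ \<or> (p + 2 * d) mod int n \<in> occ"

definition next_seat :: "nat \<Rightarrow> int \<Rightarrow> int set \<Rightarrow> int \<Rightarrow> int option \<Rightarrow> bool \<Rightarrow> int" where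
  "next_seat n d occ p t w4 =
     (if enters_W4 n d occ p w4 then first_empty n d occ
      else if t = Some d then (p + 2 * d) mod int n else (p + d) mod int n)"

definition remaining_napkins :: "nat \<Rightarrow> int set \<Rightarrow> int \<Rightarrow> int option \<Rightarrow> int set" where
  "remaining_napkins n N s r = (case r of None \<Rightarrow> N | Some e \<Rightarrow> N - {side_nap n s e})"

fun stepW :: "nat \<Rightarrow> int \<Rightarrow> wstate \<Rightarrow> int \<Rightarrow> wstate" where
  "stepW n d (occ, N, p, t, w4, c) e =
     (let s = next_seat n d occ p t w4; r = take_nap n N s e
      in (insert s occ, remaining_napkins n N s r, s, r, enters_W4 n d occ p w4,
          c + (if r = None then 1 else 0)))"

lemma runW_Cons: "runW n d st (e # es) = runW n d (stepW n d st e) es"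
  by (cases st) (simp add: Let_def enters_W4_def next_seat_def remaining_napkins_def)

lemma side_nap_cases: "side_nap n s e \<in> {s mod int n, (s - 1) mod int n}"
  by (simp add: side_nap_def)

lemma take_nap_eq_None_iff:
  assumes "e \<in> {-1, 1}"
  shows "take_nap n N s e = None \<longleftrightarrow> s mod int n \<notin> N \<and> (s - 1) mod int n \<notin> N"
  using assms by (auto simp: take_nap_def side_nap_def)

lemma remaining_napkins_eq: "\<exists>Z \<subseteq> {s mod int n, (s - 1) mod int n}. remaining_napkins n N s r = N - Z"
proof (cases r)
  case None
  then show ?thesis by (intro exI[of _ "{}"]) (simp add: remaining_napkins_def)
next
  case (Some e)
  then show ?thesis
    using side_nap_cases by (intro exI[of _ "{side_nap n s e}"]) (simp add: remaining_napkins_def)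
qed

lemma first_empty_mem:
  assumes "{0..<int n} - occ \<noteq> {}"
  shows "first_empty n 1 occ \<in> {0..<int n} - occ"
proof -
  obtain x where x: "x \<in> {0..<int n} - occ" using assms by blast
  then have "int (nat x) mod int n \<notin> occ" by auto
  then have "int (LEAST k. int k mod int n \<notin> occ) mod int n \<notin> occ"
    by (rule LeastI)
  then show ?thesis using x by (simp add: first_empty_def)
qed

lemma mod_diff_one_add_one: "x \<in> {0..<int n} \<Longrightarrow> ((x - 1) mod int n + 1) mod int n = x"
  by (simp add: mod_add_left_eq)

section \<open>Step W4\<close>

text \<open>With no two empty seats adjacent, seating a diner touches no napkin of another empty seat.\<close>

lemma trap_seats_W4_step:
  assumes s: "s \<in> {0..<int n} - occ" and isolated: "\<forall>x\<in>{0..<int n} - occ. (x + 1) mod int n \<in> occ"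
    and Z: "Z \<subseteq> {s, (s - 1) mod int n}"
  shows "trap_seats n (insert s occ) (N - Z) = trap_seats n occ N - {s}"
proof -
  have "x \<notin> Z \<and> (x - 1) mod int n \<notin> Z" if x: "x \<in> {0..<int n} - occ" "x \<noteq> s" for x
  proof -
    have "x \<noteq> (s - 1) mod int n"
    proof
      assume "x = (s - 1) mod int n"
      then have "(x + 1) mod int n = s" using s mod_diff_one_add_one[of s n] by simp
      then show False using isolated x s by auto
    qed
    moreover have "(x - 1) mod int n \<noteq> s"
    proof
      assume "(x - 1) mod int n = s"
      then have "(s + 1) mod int n = x" using x mod_diff_one_add_one[of x n] by simp
      then show False using isolated x s by auto
    qed
    moreover have "(x - 1) mod int n \<noteq> (s - 1) mod int n"
      using x s mod_diff_one_add_one[of x n] mod_diff_one_add_one[of s n] by force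
    ultimately show ?thesis using Z by auto
  qed
  then show ?thesis unfolding trap_seats_def by auto
qed

lemma finite_trap_seats: "finite (trap_seats n occ N)"
  by (rule finite_subset[of _ "{0..<int n}"]) (auto simp: trap_seats_def)

lemma runW_W4:
  assumes "occ \<subseteq> {0..<int n}" "\<forall>x\<in>{0..<int n} - occ. (x + 1) mod int n \<in> occ"
    and "enters_W4 n 1 occ p w4"
    and "length es = card ({0..<int n} - occ)" "set es \<subseteq> {-1, 1}"
  shows "runW n 1 (occ, N, p, t, w4, c) es = c + card (trap_seats n occ N)"
  using assms
proof (induction es arbitrary: occ N p t w4 c)
  case Nil
  then have "trap_seats n occ N = {}" by (auto simp: trap_seats_def)
  then show ?case by simp
next
  case (Cons e es)
  then have "{0..<int n} - occ \<noteq> {}" by auto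
  define s where "s = first_empty n 1 occ"
  have s: "s \<in> {0..<int n} - occ" unfolding s_def by (rule first_empty_mem) fact
  define r where "r = take_nap n N s e"
  obtain Z where Z: "Z \<subseteq> {s, (s - 1) mod int n}" "remaining_napkins n N s r = N - Z"
    using remaining_napkins_eq[of s n N r] s by auto
  have "stepW n 1 (occ, N, p, t, w4, c) e = (insert s occ, N - Z, s, r, True, c + (if r = None then 1 else 0))"
    using Cons.prems(3) Z(2) by (simp add: s_def r_def next_seat_def Let_def)
  moreover have "runW n 1 (insert s occ, N - Z, s, r, True, c + (if r = None then 1 else 0)) es
      = c + (if r = None then 1 else 0) + card (trap_seats n (insert s occ) (N - Z))"
  proof (rule Cons.IH)
    have "{0..<int n} - insert s occ = ({0..<int n} - occ) - {s}" by auto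
    then show "length es = card ({0..<int n} - insert s occ)" using s Cons.prems(4) by simp
  qed (use Cons.prems s in \<open>auto simp: enters_W4_def\<close>)
  moreover have "s \<in> trap_seats n occ N \<longleftrightarrow> r = None"
    using s take_nap_eq_None_iff[of e n N s] Cons.prems(5) by (auto simp: r_def trap_seats_def)
  then have "card (trap_seats n occ N) = (if r = None then 1 else 0) + card (trap_seats n occ N - {s})"
    using card.remove[OF finite_trap_seats] by auto
  ultimately show ?case
    using trap_seats_W4_step[OF s Cons.prems(2) Z(1)] by (simp add: runW_Cons)
qed

section \<open>Steps W1 to W3\<close>

text \<open>\<open>traps m b es\<close> counts the traps set by diners with preferences \<open>es\<close> when \<open>m\<close> empty seats
  remain ahead of the previous diner and \<open>b\<close> says whether that diner took the napkin ahead.\<close>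

fun traps :: "nat \<Rightarrow> bool \<Rightarrow> int list \<Rightarrow> nat" where
  "traps m b [] = 0"
| "traps m b (e # es) =
     (if m < 2 then 0
      else (if b \<and> e \<noteq> 1 then 1 else 0) + traps (if b then m - 2 else m - 1) (e = 1) es)"

lemma trap_seats_W1_W3_step:
  assumes p: "0 \<le> p" "p \<in> occ" and s: "s \<in> {p + 1, p + 2}" "s < int n"
    and occ: "occ \<subseteq> {0..p}" "0 \<in> occ"
    and N: "{p + 1..<int n} \<subseteq> N" "p \<in> N \<longleftrightarrow> s = p + 1" and z: "z \<in> {s, s - 1}"
  shows "trap_seats n (insert s occ) (N - {z})
       = trap_seats n occ N \<union> (if s = p + 2 \<and> z = s - 1 then {p + 1} else {})"
proof (rule set_eqI)
  fix x
  consider "x \<le> 0 \<or> x \<ge> int n" | "0 < x" "x < p" | "x = p" | "x = p + 1" | "p + 2 \<le> x" "x < int n"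
    by linarith
  then show "x \<in> trap_seats n (insert s occ) (N - {z})
      \<longleftrightarrow> x \<in> trap_seats n occ N \<union> (if s = p + 2 \<and> z = s - 1 then {p + 1} else {})"
  proof cases
    case 1
    then have "x \<notin> {0..<int n} - occ" "x \<noteq> p + 1" using p s occ by auto
    then show ?thesis unfolding trap_seats_def by auto
  next
    case 2
    then have "(x - 1) mod int n = x - 1" "x \<noteq> s" "x \<noteq> z" "x - 1 \<noteq> z" "x \<noteq> p + 1"
      using s z by auto
    then show ?thesis by (simp add: trap_seats_def)
  next
    case 3
    then show ?thesis using p by (simp add: trap_seats_def)
  next
    case 4
    then have "(x - 1) mod int n = p" "x \<in> N" using p s N(1) by auto
    moreover have "x \<notin> insert s occ \<and> p \<notin> N \<and> (x = z \<longleftrightarrow> z = s - 1)" if "s = p + 2"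
      using 4 that occ N(2) z by auto
    ultimately show ?thesis using 4 s p by (auto simp: trap_seats_def)
  next
    case 5
    then have "x \<in> N" "x \<noteq> p + 1" "x = z \<longrightarrow> x = s" using N(1) s z by auto
    then show ?thesis unfolding trap_seats_def by auto
  qed
qed

definition W1_W3_invariant :: "nat \<Rightarrow> int set \<Rightarrow> int set \<Rightarrow> int \<Rightarrow> int option \<Rightarrow> bool" where
  "W1_W3_invariant n occ N p t \<longleftrightarrow>
     0 \<le> p \<and> p < int n \<and> occ \<subseteq> {0..p} \<and> 0 \<in> occ \<and> p \<in> occ \<and> (\<forall>x\<in>{0..<p} - occ. x + 1 \<in> occ)
     \<and> {p + 1..<int n} \<subseteq> N \<and> (p \<in> N \<longleftrightarrow> t \<noteq> Some 1)"

lemma W1_W3_invariant_exit: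
  assumes "W1_W3_invariant n occ N p t" "int n < p + 3"
  shows "\<forall>x\<in>{0..<int n} - occ. (x + 1) mod int n \<in> occ"
    and "enters_W4 n 1 occ p False"
proof -
  show "\<forall>x\<in>{0..<int n} - occ. (x + 1) mod int n \<in> occ"
  proof
    fix x assume x: "x \<in> {0..<int n} - occ"
    show "(x + 1) mod int n \<in> occ"
    proof (cases "x < p")
      case True
      then show ?thesis using x assms(1) by (auto simp: W1_W3_invariant_def)
    next
      case False
      moreover have "x \<noteq> p" using x assms(1) by (auto simp: W1_W3_invariant_def)
      ultimately have "x = int n - 1" using x assms(2) by auto
      then show ?thesis using assms(1) by (simp add: W1_W3_invariant_def)
    qed
  qed
  have "p + 1 = int n \<or> p + 2 = int n" using assms by (auto simp: W1_W3_invariant_def)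
  then show "enters_W4 n 1 occ p False"
    using assms(1) by (auto simp: W1_W3_invariant_def enters_W4_def)
qed

lemma W1_W3_invariant_step:
  assumes "W1_W3_invariant n occ N p t" "p + 3 \<le> int n"
    and s: "s = (if t = Some 1 then p + 2 else p + 1)" and z: "z = (if e = 1 then s else s - 1)"
  shows "W1_W3_invariant n (insert s occ) (N - {z}) s (Some e)"
  unfolding W1_W3_invariant_def
proof (intro conjI)
  show "\<forall>x\<in>{0..<s} - insert s occ. x + 1 \<in> insert s occ"
  proof
    fix x assume x: "x \<in> {0..<s} - insert s occ"
    moreover have "x \<noteq> p" using x assms(1) by (auto simp: W1_W3_invariant_def)
    ultimately have "x < p \<or> x + 1 = s" using s by auto
    then show "x + 1 \<in> insert s occ" using x assms(1) by (auto simp: W1_W3_invariant_def)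
  qed
  have "s \<in> N" using assms by (auto simp: W1_W3_invariant_def)
  then show "s \<in> N - {z} \<longleftrightarrow> Some e \<noteq> Some 1" by (simp add: z)
qed (use assms in \<open>auto simp: W1_W3_invariant_def\<close>)

lemma stepW_W1_W3:
  assumes "W1_W3_invariant n occ N p t" "p + 3 \<le> int n" "e \<in> {-1, 1}"
    and s: "s = (if t = Some 1 then p + 2 else p + 1)" and z: "z = (if e = 1 then s else s - 1)"
  shows "stepW n 1 (occ, N, p, t, False, c) e = (insert s occ, N - {z}, s, Some e, False, c)"
proof -
  have "side_nap n s e = z" "z \<in> N" using assms by (auto simp: side_nap_def W1_W3_invariant_def)
  then have "take_nap n N s e = Some e" by (simp add: take_nap_def)
  moreover have "(p + 1) mod int n = p + 1" "(p + 2) mod int n = p + 2" "p + 1 \<notin> occ" "p + 2 \<notin> occ"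
    using assms by (auto simp: W1_W3_invariant_def)
  ultimately show ?thesis using \<open>side_nap n s e = z\<close>
    by (cases "t = Some 1") (simp_all add: s enters_W4_def next_seat_def remaining_napkins_def Let_def)
qed

lemma runW_W1_W3:
  assumes "W1_W3_invariant n occ N p t"
    and "length es = card ({0..<int n} - occ)" "set es \<subseteq> {-1, 1}"
  shows "runW n 1 (occ, N, p, t, False, c) es
       = c + card (trap_seats n occ N) + traps (nat (int n - 1 - p)) (t = Some 1) es"
  using assms
proof (induction es arbitrary: occ N p t c)
  case Nil
  then have "trap_seats n occ N = {}" by (auto simp: trap_seats_def)
  then show ?case by simp
next
  case (Cons e es)
  note inv = Cons.prems(1)[unfolded W1_W3_invariant_def]
  show ?case
  proof (cases "p + 3 \<le> int n")
    case False
    then have "runW n 1 (occ, N, p, t, False, c) (e # es) = c + card (trap_seats n occ N)"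
      using W1_W3_invariant_exit[OF Cons.prems(1)] inv Cons.prems(2,3) by (intro runW_W4) auto
    then show ?thesis using False by simp
  next
    case True
    define s where "s = (if t = Some 1 then p + 2 else p + 1)"
    define z where "z = (if e = 1 then s else s - 1)"
    have s: "s \<in> {p + 1, p + 2}" "s < int n" and z: "z \<in> {s, s - 1}"
      using True unfolding s_def z_def by auto
    have "{0..<int n} - insert s occ = ({0..<int n} - occ) - {s}" "s \<in> {0..<int n} - occ"
      using s inv by auto
    then have "runW n 1 (insert s occ, N - {z}, s, Some e, False, c) es
       = c + card (trap_seats n (insert s occ) (N - {z})) + traps (nat (int n - 1 - s)) (Some e = Some 1) es"
      using Cons.IH W1_W3_invariant_step[OF Cons.prems(1) True s_def z_def] Cons.prems(2,3) by simp
    moreover have "p \<in> N \<longleftrightarrow> s = p + 1" "s = p + 2 \<and> z = s - 1 \<longleftrightarrow> t = Some 1 \<and> e \<noteq> 1"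
      using inv by (auto simp: s_def z_def)
    then have "trap_seats n (insert s occ) (N - {z})
       = trap_seats n occ N \<union> (if t = Some 1 \<and> e \<noteq> 1 then {p + 1} else {})"
      using trap_seats_W1_W3_step[of p occ s n N z] inv s z by simp
    moreover have "p + 1 \<in> {p + 1..<int n}" using True by simp
    then have "p + 1 \<notin> trap_seats n occ N" using inv by (auto simp: trap_seats_def)
    moreover have "nat (int n - 1 - s) = (if t = Some 1 then nat (int n - 1 - p) - 2 else nat (int n - 1 - p) - 1)"
      using True by (auto simp: s_def)
    then have "traps (nat (int n - 1 - p)) (t = Some 1) (e # es)
       = (if t = Some 1 \<and> e \<noteq> 1 then 1 else 0) + traps (nat (int n - 1 - s)) (e = 1) es"
      using True by simp
    ultimately show ?thesis
      using True stepW_W1_W3[OF Cons.prems(1) True _ s_def z_def] Cons.prems(3) finite_trap_seats[of n occ N]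
      by (simp add: runW_Cons)
  qed
qed

lemma nuW_Cons_right:
  assumes "length ys + 1 = n" "set ys \<subseteq> {-1, 1}"
  shows "nuW n (1 # ys) = traps (n - 1) True ys"
proof -
  have "{0..<int n} - {side_nap n 0 1} = {1..<int n}" by (auto simp: side_nap_def)
  then have "nuW n (1 # ys) = runW n 1 ({0}, {1..<int n}, 0, Some 1, False, 0) ys"
    by (simp add: nuW_def)
  moreover have "W1_W3_invariant n {0} {1..<int n} 0 (Some 1)"
    using assms(1) by (auto simp: W1_W3_invariant_def)
  moreover have "{0..<int n} - {0} = {1..<int n}" "trap_seats n {0} {1..<int n} = {}"
    by (auto simp: trap_seats_def)
  ultimately show ?thesis
    using runW_W1_W3[of n "{0}" "{1..<int n}" 0 "Some 1" ys 0] assms by (simp add: nat_diff_distrib)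
qed

section \<open>Reflection of the table\<close>

text \<open>The reflection \<open>s \<mapsto> -s\<close> swaps left and right and sends napkin \<open>k\<close>, which lies
  between seats \<open>k\<close> and \<open>k + 1\<close>, to napkin \<open>-k - 1\<close>.\<close>

definition mirror_seat :: "nat \<Rightarrow> int \<Rightarrow> int" where
  "mirror_seat n s = (- s) mod int n"

definition mirror_napkin :: "nat \<Rightarrow> int \<Rightarrow> int" where
  "mirror_napkin n k = (- k - 1) mod int n"

fun mirror_state :: "nat \<Rightarrow> wstate \<Rightarrow> wstate" where
  "mirror_state n (occ, N, p, t, w4, c) =
     (mirror_seat n ` occ, mirror_napkin n ` N, mirror_seat n p, map_option uminus t, w4, c)"

lemma mirror_seat_mirror_seat: "x \<in> {0..<int n} \<Longrightarrow> mirror_seat n (mirror_seat n x) = x"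
  by (simp add: mirror_seat_def mod_minus_eq)

lemma mirror_napkin_mirror_napkin:
  assumes "x \<in> {0..<int n}"
  shows "mirror_napkin n (mirror_napkin n x) = x"
proof -
  have "mirror_napkin n (mirror_napkin n x) = (- (- x - 1) - 1) mod int n"
    unfolding mirror_napkin_def by (metis mod_diff_left_eq mod_minus_eq)
  then show ?thesis using assms by simp
qed

lemma inj_on_mirror_seat: "inj_on (mirror_seat n) {0..<int n}"
  by (rule inj_on_inverseI) (rule mirror_seat_mirror_seat)

lemma inj_on_mirror_napkin: "inj_on (mirror_napkin n) {0..<int n}"
  by (rule inj_on_inverseI) (rule mirror_napkin_mirror_napkin)

lemma mirror_seat_mem_image_iff:
  "A \<subseteq> {0..<int n} \<Longrightarrow> x \<in> {0..<int n} \<Longrightarrow> mirror_seat n x \<in> mirror_seat n ` A \<longleftrightarrow> x \<in> A"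
  by (rule inj_on_image_mem_iff[OF inj_on_mirror_seat])

lemma mirror_napkin_mem_image_iff:
  "A \<subseteq> {0..<int n} \<Longrightarrow> x \<in> {0..<int n} \<Longrightarrow> mirror_napkin n x \<in> mirror_napkin n ` A \<longleftrightarrow> x \<in> A"
  by (rule inj_on_image_mem_iff[OF inj_on_mirror_napkin])

lemma mirror_napkin_image:
  assumes "0 < n"
  shows "mirror_napkin n ` {0..<int n} = {0..<int n}"
proof
  show "mirror_napkin n ` {0..<int n} \<subseteq> {0..<int n}" using assms by (auto simp: mirror_napkin_def)
  then show "{0..<int n} \<subseteq> mirror_napkin n ` {0..<int n}"
    using mirror_napkin_mirror_napkin by (metis image_subset_iff rev_image_eqI subsetI)
qed

lemma mirror_seat_add_mod: "mirror_seat n ((p + a) mod int n) = (mirror_seat n p - a) mod int n"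
  by (simp add: mirror_seat_def mod_minus_eq mod_diff_left_eq)

lemma side_nap_range: "0 < n \<Longrightarrow> side_nap n s e \<in> {0..<int n}"
  by (simp add: side_nap_def)

lemma side_nap_mirror:
  assumes "e \<in> {-1, 1}"
  shows "side_nap n (mirror_seat n s) (- e) = mirror_napkin n (side_nap n s e)"
proof -
  have "((- s) mod int n - 1) mod int n = (- (s mod int n) - 1) mod int n"
    by (metis mod_diff_left_eq mod_minus_eq)
  moreover have "(- ((s - 1) mod int n) - 1) mod int n = (- (s - 1) - 1) mod int n"
    by (metis mod_diff_left_eq mod_minus_eq)
  ultimately show ?thesis using assms by (auto simp: side_nap_def mirror_seat_def mirror_napkin_def)
qed

lemma take_nap_mirror:
  assumes "0 < n" "N \<subseteq> {0..<int n}" "e \<in> {-1, 1}"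
  shows "take_nap n (mirror_napkin n ` N) (mirror_seat n s) (- e) = map_option uminus (take_nap n N s e)"
proof -
  have "side_nap n (mirror_seat n s) (- e') \<in> mirror_napkin n ` N \<longleftrightarrow> side_nap n s e' \<in> N"
    if "e' \<in> {-1, 1}" for e'
    using that assms(2) side_nap_range[OF assms(1)] by (simp add: side_nap_mirror mirror_napkin_mem_image_iff)
  from this[of e] this[of "- e"] show ?thesis using assms(3) by (auto simp: take_nap_def)
qed

lemma first_empty_mirror:
  assumes "0 < n" "occ \<subseteq> {0..<int n}"
  shows "mirror_seat n (first_empty n (-1) occ) = first_empty n 1 (mirror_seat n ` occ)"
proof -
  have "mirror_seat n ((- int k) mod int n) = int k mod int n" for k
    by (simp add: mirror_seat_def mod_minus_eq)
  then have "(- int k) mod int n \<notin> occ \<longleftrightarrow> int k mod int n \<notin> mirror_seat n ` occ" for k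
    using mirror_seat_mem_image_iff[OF assms(2), of "(- int k) mod int n"] assms(1) by simp
  then show ?thesis by (simp add: first_empty_def mirror_seat_def mod_minus_eq)
qed

lemma enters_W4_mirror:
  assumes "0 < n" "occ \<subseteq> {0..<int n}"
  shows "enters_W4 n 1 (mirror_seat n ` occ) (mirror_seat n p) w4 \<longleftrightarrow> enters_W4 n (-1) occ p w4"
  using mirror_seat_add_mod[of n p "-1"] mirror_seat_add_mod[of n p "-2"] assms
    mirror_seat_mem_image_iff[OF assms(2), of "(p - 1) mod int n"]
    mirror_seat_mem_image_iff[OF assms(2), of "(p - 2) mod int n"]
  by (simp add: enters_W4_def)

lemma next_seat_mirror:
  assumes "0 < n" "occ \<subseteq> {0..<int n}"
  shows "next_seat n 1 (mirror_seat n ` occ) (mirror_seat n p) (map_option uminus t) w4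
       = mirror_seat n (next_seat n (-1) occ p t w4)"
proof -
  have "map_option uminus t = Some 1 \<longleftrightarrow> t = Some (-1)" by (cases t) auto
  then show ?thesis
    using mirror_seat_add_mod[of n p "-1"] mirror_seat_add_mod[of n p "-2"]
    by (simp add: next_seat_def enters_W4_mirror[OF assms] first_empty_mirror[OF assms])
qed

lemma remaining_napkins_mirror:
  assumes "0 < n" "N \<subseteq> {0..<int n}" "set_option r \<subseteq> {-1, 1}"
  shows "remaining_napkins n (mirror_napkin n ` N) (mirror_seat n s) (map_option uminus r)
       = mirror_napkin n ` remaining_napkins n N s r"
proof (cases r)
  case None
  then show ?thesis by (simp add: remaining_napkins_def)
next
  case (Some e)
  have "mirror_napkin n ` (N - {side_nap n s e}) = mirror_napkin n ` N - {mirror_napkin n (side_nap n s e)}"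
    using inj_on_image_set_diff[OF inj_on_mirror_napkin[of n], of N "{side_nap n s e}"] assms(2)
      side_nap_range[OF assms(1)] by auto
  then show ?thesis using Some assms(3) by (simp add: remaining_napkins_def side_nap_mirror)
qed

lemma take_nap_values: "e \<in> {-1, 1} \<Longrightarrow> set_option (take_nap n N s e) \<subseteq> {-1, 1}"
  by (auto simp: take_nap_def)

lemma stepW_mirror:
  assumes "0 < n" "occ \<subseteq> {0..<int n}" "N \<subseteq> {0..<int n}" "e \<in> {-1, 1}"
  shows "stepW n 1 (mirror_state n (occ, N, p, t, w4, c)) (- e)
       = mirror_state n (stepW n (-1) (occ, N, p, t, w4, c) e)"
  using assms
  by (simp add: Let_def next_seat_mirror enters_W4_mirror take_nap_mirror remaining_napkins_mirror
      take_nap_values)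

lemma runW_mirror:
  assumes "0 < n" "occ \<subseteq> {0..<int n}" "N \<subseteq> {0..<int n}" "set es \<subseteq> {-1, 1}"
  shows "runW n (-1) (occ, N, p, t, w4, c) es = runW n 1 (mirror_state n (occ, N, p, t, w4, c)) (map uminus es)"
  using assms(2-4)
proof (induction es arbitrary: occ N p t w4 c)
  case Nil
  then show ?case by simp
next
  case (Cons e es)
  define s where "s = next_seat n (-1) occ p t w4"
  define r where "r = take_nap n N s e"
  have "s \<in> {0..<int n}" using assms(1) by (simp add: s_def next_seat_def first_empty_def)
  then have "insert s occ \<subseteq> {0..<int n}" "remaining_napkins n N s r \<subseteq> {0..<int n}"
    using Cons.prems(1,2) by (auto simp: remaining_napkins_def split: option.split)
  moreover have "stepW n (-1) (occ, N, p, t, w4, c) e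
      = (insert s occ, remaining_napkins n N s r, s, r, enters_W4 n (-1) occ p w4, c + (if r = None then 1 else 0))"
    by (simp add: s_def r_def Let_def)
  ultimately show ?case
    using Cons stepW_mirror[OF assms(1) Cons.prems(1,2), of e p t w4 c, symmetric] by (simp add: runW_Cons)
qed

lemma nuW_Cons_left:
  assumes "length ys + 1 = n" "set ys \<subseteq> {-1, 1}"
  shows "nuW n ((-1) # ys) = traps (n - 1) True (map uminus ys)"
proof -
  have n: "0 < n" using assms(1) by simp
  have "side_nap n 0 (-1) = int n - 1" using n by (simp add: side_nap_def zmod_minus1)
  then have "nuW n ((-1) # ys) = runW n (-1) ({0}, {0..<int n} - {int n - 1}, 0, Some (-1), False, 0) ys"
    by (simp add: nuW_def)
  also have "\<dots> = runW n 1 (mirror_state n ({0}, {0..<int n} - {int n - 1}, 0, Some (-1), False, 0)) (map uminus ys)"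
    using n assms(2) by (intro runW_mirror) auto
  also have "mirror_state n ({0}, {0..<int n} - {int n - 1}, 0, Some (-1), False, 0)
      = ({0}, {0..<int n} - {side_nap n 0 1}, 0, Some 1, False, 0)"
  proof -
    have "mirror_napkin n (int n - 1) = 0" by (simp add: mirror_napkin_def)
    then have "mirror_napkin n ` ({0..<int n} - {int n - 1}) = {0..<int n} - {0}"
      using inj_on_image_set_diff[OF inj_on_mirror_napkin[of n]] mirror_napkin_image[OF n] n by auto
    then show ?thesis by (simp add: mirror_seat_def side_nap_def)
  qed
  also have "runW n 1 \<dots> (map uminus ys) = nuW n (1 # map uminus ys)" by (simp add: nuW_def)
  also have "\<dots> = traps (n - 1) True (map uminus ys)" using assms by (intro nuW_Cons_right) auto
  finally show ?thesis .
qed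

section \<open>Expectation and generating function\<close>

lemma prefs_eq_lists: "prefs L = {xs. set xs \<subseteq> {-1, 1} \<and> length xs = L}"
  by (auto simp: prefs_def)

lemma finite_prefs: "finite (prefs L)"
  by (simp add: prefs_eq_lists finite_lists_length_eq)

lemma card_prefs: "card (prefs L) = 2 ^ L"
  by (simp add: prefs_eq_lists card_lists_length_eq numeral_2_eq_2)

lemma prefs_Suc: "prefs (Suc L) = (#) 1 ` prefs L \<union> (#) (-1) ` prefs L"
  by (auto simp: prefs_def length_Suc_conv)

lemma sum_prefs_Suc:
  "(\<Sum>xs\<in>prefs (Suc L). f xs) = (\<Sum>ys\<in>prefs L. f (1 # ys)) + (\<Sum>ys\<in>prefs L. f ((-1) # ys))"
  unfolding prefs_Suc by (subst sum.union_disjoint) (auto simp: finite_prefs sum.reindex)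

lemma sum_prefs_map_uminus: "(\<Sum>xs\<in>prefs L. f (map uminus xs)) = (\<Sum>xs\<in>prefs L. f xs)"
  by (rule sum.reindex_bij_witness[of _ "map uminus" "map uminus"]) (auto simp: prefs_def)

fun expected_traps :: "nat \<Rightarrow> bool \<Rightarrow> real" where
  "expected_traps 0 b = 0"
| "expected_traps (Suc 0) b = 0"
| "expected_traps (Suc (Suc k)) True = 1/2 + (expected_traps k True + expected_traps k False) / 2"
| "expected_traps (Suc (Suc k)) False = (expected_traps (Suc k) True + expected_traps (Suc k) False) / 2"

lemma sum_traps_prefs: "m \<le> L \<Longrightarrow> (\<Sum>xs\<in>prefs L. real (traps m b xs)) = 2 ^ L * expected_traps m b"
proof (induction L arbitrary: m b)
  case 0
  then show ?case by (simp add: prefs_def)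
next
  case (Suc L)
  show ?case
  proof (cases "m < 2")
    case True
    then have "traps m b xs = 0" "expected_traps m b = 0" for xs
      by (cases xs; auto simp: less_2_cases_iff)+
    then show ?thesis by simp
  next
    case False
    define m' where "m' = (if b then m - 2 else m - 1)"
    have IH: "(\<Sum>xs\<in>prefs L. real (traps m' b' xs)) = 2 ^ L * expected_traps m' b'" for b'
      using Suc False by (intro Suc.IH) (auto simp: m'_def)
    have "(\<Sum>xs\<in>prefs (Suc L). real (traps m b xs))
        = (\<Sum>ys\<in>prefs L. real (traps m' True ys)) + (\<Sum>ys\<in>prefs L. (if b then 1 else 0) + real (traps m' False ys))"
      using False by (simp add: sum_prefs_Suc m'_def)
    also have "\<dots> = 2 ^ L * (expected_traps m' True + (if b then 1 else 0) + expected_traps m' False)"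
      by (simp add: sum.distrib IH card_prefs algebra_simps)
    also have "\<dots> = 2 ^ Suc L * expected_traps m b"
    proof -
      obtain k where "m = Suc (Suc k)" using False by (metis add_2_eq_Suc le_add_diff_inverse not_less)
      then show ?thesis by (cases b) (simp_all add: m'_def)
    qed
    finally show ?thesis .
  qed
qed

lemma EW_Suc: "EW (Suc L) = expected_traps L True"
proof -
  have "(\<Sum>xs\<in>prefs (Suc L). real (nuW (Suc L) xs))
      = (\<Sum>ys\<in>prefs L. real (nuW (Suc L) (1 # ys))) + (\<Sum>ys\<in>prefs L. real (nuW (Suc L) ((-1) # ys)))"
    by (rule sum_prefs_Suc)
  also have "\<dots> = (\<Sum>ys\<in>prefs L. real (traps L True ys)) + (\<Sum>ys\<in>prefs L. real (traps L True (map uminus ys)))"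
    by (intro arg_cong2[where f = "(+)"] sum.cong) (auto simp: prefs_def nuW_Cons_right nuW_Cons_left)
  also have "\<dots> = 2 ^ Suc L * expected_traps L True"
    by (simp add: sum_prefs_map_uminus[of "\<lambda>xs. real (traps L True xs)"] sum_traps_prefs)
  finally show ?thesis by (simp add: EW_def)
qed

lemma expected_traps_closed_form:
  assumes "m \<ge> 1"
  shows "expected_traps m True = (3 * real m + 1) / 18 + 4/9 * (-1/2) ^ m
       \<and> expected_traps m False = real m / 6 - 5/18 - 2/9 * (-1/2) ^ m"
  using assms
proof (induction m rule: less_induct)
  case (less m)
  show ?case
  proof (cases "m \<le> 2")
    case True
    then have "m = 1 \<or> m = 2" using less.prems by auto
    then show ?thesis by (auto simp: numeral_2_eq_2)
  next
    case False
    define k where "k = m - 2"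
    have m: "m = Suc (Suc k)" "k \<ge> 1" using False unfolding k_def by auto
    define y where "y = (-1/2 :: real) ^ k"
    have power: "(-1/2 :: real) ^ Suc k = - y / 2" "(-1/2 :: real) ^ Suc (Suc k) = y / 4"
      by (simp_all add: y_def)
    have "expected_traps k True = (3 * real k + 1) / 18 + 4/9 * y"
         "expected_traps k False = real k / 6 - 5/18 - 2/9 * y"
         "expected_traps (Suc k) True = (3 * real k + 4) / 18 - 2/9 * y"
         "expected_traps (Suc k) False = (real k + 1) / 6 - 5/18 + 1/9 * y"
      using less.IH[of k] less.IH[of "Suc k"] m unfolding power(1) by (auto simp: y_def)
    then show ?thesis unfolding m power by (simp add: field_simps)
  qed
qed

lemma EW_add_2: "EW (n + 2) = (3 * real n + 4) / 18 - 2/9 * (-1/2) ^ n"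
  using expected_traps_closed_form[of "n + 1"] by (simp add: EW_Suc field_simps)

lemma EW_recurrence: "2 * EW (n + 5) - 3 * EW (n + 4) + EW (n + 2) = 0"
proof -
  have index: "n + 3 + 2 = n + 5" "n + 2 + 2 = n + 4" by simp_all
  show ?thesis
    using EW_add_2[of "n + 3", unfolded index] EW_add_2[of "n + 2", unfolded index] EW_add_2[of n]
    by (simp add: power_add field_simps)
qed

lemma EW_initial: "EW 0 = 0" "EW 1 = 0" "EW 2 = 0" "EW 3 = 1/2" "EW 4 = 1/2"
  by (simp add: EW_def) (simp_all add: EW_Suc numeral_eq_Suc)

lemma Abs_fps_EW_times_denominator:
  "Abs_fps EW * (4 - 6 * fps_X + 2 * fps_X ^ 3) = 2 * fps_X ^ 3 - (fps_X ^ 4 :: real fps)"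
proof (rule fps_ext)
  fix k
  have "Abs_fps EW * (4 - 6 * fps_X + 2 * fps_X ^ 3)
      = 4 * Abs_fps EW - 6 * (fps_X ^ 1 * Abs_fps EW) + 2 * (fps_X ^ 3 * Abs_fps EW)"
    by (simp add: algebra_simps)
  then have "fps_nth (Abs_fps EW * (4 - 6 * fps_X + 2 * fps_X ^ 3)) k
      = 4 * EW k - 6 * (if k < 1 then 0 else EW (k - 1)) + 2 * (if k < 3 then 0 else EW (k - 3))"
    by (simp add: fps_X_power_mult_nth numeral_fps_const del: power_one_right)
  moreover have "fps_nth (2 * fps_X ^ 3 - (fps_X ^ 4 :: real fps)) k = (if k = 3 then 2 else if k = 4 then -1 else 0)"
    by (simp add: numeral_fps_const)
  moreover have "4 * EW k - 6 * (if k < 1 then 0 else EW (k - 1)) + 2 * (if k < 3 then 0 else EW (k - 3))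
      = (if k = 3 then 2 else if k = 4 then -1 else 0)"
  proof (cases "k < 5")
    case True
    then have "k \<in> {0, 1, 2, 3, 4}" by auto
    then show ?thesis using EW_initial by (auto simp: One_nat_def)
  next
    case False
    then obtain n where "k = n + 5" by (metis add.commute le_Suc_ex not_less)
    then show ?thesis using EW_recurrence[of n] by (simp add: algebra_simps)
  qed
  ultimately show "fps_nth (Abs_fps EW * (4 - 6 * fps_X + 2 * fps_X ^ 3)) k
      = fps_nth (2 * fps_X ^ 3 - (fps_X ^ 4 :: real fps)) k" by simp
qed

lemma Abs_fps_EW: "Abs_fps EW = fps_X ^ 3 * (2 - fps_X) / (2 * (1 - fps_X) ^ 2 * (2 + fps_X))"
proof -
  have den: "2 * (1 - fps_X) ^ 2 * (2 + fps_X) = (4 - 6 * fps_X + 2 * fps_X ^ 3 :: real fps)"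
    by (simp add: algebra_simps power2_eq_square power3_eq_cube)
  have num: "fps_X ^ 3 * (2 - fps_X) = (2 * fps_X ^ 3 - fps_X ^ 4 :: real fps)"
    by algebra
  have "fps_nth (4 - 6 * fps_X + 2 * fps_X ^ 3 :: real fps) 0 \<noteq> 0"
    by (simp add: numeral_fps_const)
  then have "(4 - 6 * fps_X + 2 * fps_X ^ 3 :: real fps) \<noteq> 0" by (metis fps_zero_nth)
  then show ?thesis
    unfolding den num Abs_fps_EW_times_denominator[symmetric] by simp
qed

lemma EW_add_3: "EW (n + 3) = ((3 * real n + 7) * 2 powi (int n - 1) + (-1) ^ n) / (9 * 2 ^ n)"
proof -
  have index: "n + 1 + 2 = n + 3" by simp
  have closed: "EW (n + 3) = (3 * real n + 7) / 18 + (-1/2) ^ n / 9"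
    using EW_add_2[of "n + 1", unfolded index] by (simp add: field_simps)
  have powi: "(2::real) powi (int n - 1) = 2 ^ n / 2" by (simp add: power_int_diff)
  have power: "(-1/2::real) ^ n = (-1) ^ n / 2 ^ n" by (metis power_divide)
  show ?thesis unfolding closed powi power by (simp add: field_simps)
qed

theorem proposition4:
  shows "Abs_fps EW = fps_X ^ 3 * (2 - fps_X) / (2 * (1 - fps_X) ^ 2 * (2 + fps_X))
         \<and> (\<forall>n::nat. EW (n + 3) =
              ((3 * real n + 7) * 2 powi (int n - 1) + (-1) ^ n) / (9 * 2 ^ n))"
  using Abs_fps_EW EW_add_3 by blast

end
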